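(* Let $\gamma=(\gamma_1,\gamma_2,\gamma_3):[a,b]\to E(1,1)$ be a Euclidean $C^2$-smooth regular curve and $t\in[a,b]$. Set $B=-e^{-\gamma_3}\dot\gamma_1+e^{\gamma_3}\dot\gamma_2$, $B'=\ddot\gamma_2e^{\gamma_3}+\dot\gamma_2\dot\gamma_3e^{\gamma_3}-\ddot\gamma_1e^{-\gamma_3}+\dot\gamma_1\dot\gamma_3e^{-\gamma_3}$, $S=\frac12B^2+\dot\gamma_3^2$, and $\omega(\dot\gamma(t))=-\frac{\sqrt2}{2}(e^{-\gamma_3}\dot\gamma_1+e^{\gamma_3}\dot\gamma_2)$. (i) If $\omega(\dot\gamma(t))\ne0$, then $k^\infty_\gamma=\lim_{L\to+\infty}k^L_\gamma$ exists and equals $\dfrac{\sqrt{\frac12B^2+\dot\gamma_3^2}}{|\omega(\dot\gamma(t))|}$. (ii) If $\omega(\dot\gamma(t))=0$ and $\frac{d}{dt}\omega(\dot\gamma(t))=0$, then the limit exists and $$k^\infty_\gamma=\left\{\frac{\ddot\gamma_3^2+\frac12 (B')^2}{S^2}-\frac{\big(\dot\gamma_3\ddot\gamma_3+\frac12BB'\big)^2}{S^3}\right\}^{1/2}.$$ (iii) If $\omega(\dot\gamma(t))=0$ and $\frac{d}{dt}\omega(\dot\gamma(t))\ne0$, then $\displaystyle\lim_{L\to+\infty}\frac{k^L_\gamma}{\sqrt L}=\frac{|\frac{d}{dt}\omega(\dot\gamma(t))|}{\frac12B^2+\dot\gamma_3^2}$.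
   Context: $E(1,1)$ (the group of rigid motions of the Minkowski plane) is modelled on $\mathbb R^3$ with coordinates $(x_1,x_2,x_3)$ and vector fields $X_1=\partial_{x_3}$, $X_2=\frac{1}{\sqrt2}(-e^{x_3}\partial_{x_1}+e^{-x_3}\partial_{x_2})$, $X_3=-\frac1{\sqrt2}(e^{x_3}\partial_{x_1}+e^{-x_3}\partial_{x_2})$, dual forms $\omega_1=dx_3$, $\omega_2=\frac1{\sqrt2}(-e^{-x_3}dx_1+e^{x_3}dx_2)$, $\omega=-\frac1{\sqrt2}(e^{-x_3}dx_1+e^{x_3}dx_2)$. For $L>0$, $g_L=\omega_1\otimes\omega_1+\omega_2\otimes\omega_2+L\,\omega\otimes\omega$ with Levi-Civita connection $\nabla^L$. Regular means $\dot\gamma\ne0$ everywhere. The curvature of $\gamma$ is $k^L_\gamma=\sqrt{\|\nabla^L_{\dot\gamma}\dot\gamma\|_L^2/\|\dot\gamma\|_L^4-\langle\nabla^L_{\dot\gamma}\dot\gamma,\dot\gamma\rangle_L^2/\|\dot\gamma\|_L^6}$ and $k^\infty_\gamma:=\lim_{L\to+\infty}k^L_\gamma$ when it exists. *)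

theory Defs
  imports "HOL-Analysis.Analysis"
begin

text \<open>Points of E(1,1) are modelled as vectors in real^3; component x$1, x$2, x$3
  are the coordinates x_1, x_2, x_3 (index type 3).
  Covector components of the dual forms omega_1, omega_2, omega at a point x.\<close>

definition om1 :: "real^3 \<Rightarrow> real^3" where
  "om1 x = (\<chi> i. if i = 3 then 1 else 0)"

definition om2 :: "real^3 \<Rightarrow> real^3" where
  "om2 x = (\<chi> i. if i = 1 then - exp (- (x$3)) / sqrt 2
                 else if i = 2 then exp (x$3) / sqrt 2 else 0)"

definition omw :: "real^3 \<Rightarrow> real^3" where
  "omw x = (\<chi> i. if i = 1 then - exp (- (x$3)) / sqrt 2
                 else if i = 2 then - exp (x$3) / sqrt 2 else 0)"

definition gmat :: "real \<Rightarrow> real^3 \<Rightarrow> real^3^3" where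
  "gmat L x = (\<chi> i j. om1 x $ i * om1 x $ j + om2 x $ i * om2 x $ j + L * (omw x $ i * omw x $ j))"

definition ginner :: "real \<Rightarrow> real^3 \<Rightarrow> real^3 \<Rightarrow> real^3 \<Rightarrow> real" where
  "ginner L x u v = u \<bullet> (gmat L x *v v)"

definition dg :: "real \<Rightarrow> real^3 \<Rightarrow> 3 \<Rightarrow> 3 \<Rightarrow> 3 \<Rightarrow> real" where
  "dg L x l i j = deriv (\<lambda>s. gmat L (x + s *\<^sub>R axis l 1) $ i $ j) 0"

definition christoffel :: "real \<Rightarrow> real^3 \<Rightarrow> 3 \<Rightarrow> 3 \<Rightarrow> 3 \<Rightarrow> real" where
  "christoffel L x k i j =
     (\<Sum>l\<in>UNIV. matrix_inv (gmat L x) $ k $ l * (dg L x i j l + dg L x j i l - dg L x l i j)) / 2"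

text \<open>Covariant derivative nabla^L_{dot gamma} dot gamma at a point p, with velocity v
  and (Euclidean) acceleration w.\<close>
definition covacc :: "real \<Rightarrow> real^3 \<Rightarrow> real^3 \<Rightarrow> real^3 \<Rightarrow> real^3" where
  "covacc L p v w = (\<chi> k. w $ k + (\<Sum>i\<in>UNIV. \<Sum>j\<in>UNIV. christoffel L p k i j * v $ i * v $ j))"

definition curvL :: "real \<Rightarrow> real^3 \<Rightarrow> real^3 \<Rightarrow> real^3 \<Rightarrow> real" where
  "curvL L p v w = (let N = covacc L p v w in
     sqrt (ginner L p N N / (ginner L p v v)^2 - (ginner L p N v)^2 / (ginner L p v v)^3))"

definition omega_val :: "real^3 \<Rightarrow> real^3 \<Rightarrow> real" where
  "omega_val p v = omw p \<bullet> v"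

end

theory Submission
  imports Defs
begin

(* In the frame X_1, X_2, X_3 dual to the coframe omega_1, omega_2, omega the metric g_L is
   diag(1, 1, L). If a_1, a_2, a_3 are the coframe components of the velocity and d_1, d_2, d_3
   their derivatives along the curve, the Christoffel symbols of g_L give the coframe components
   (d_1 + (1 + L) a_2 a_3, d_2 - L a_1 a_3, d_3 - a_1 a_2 / L) of the covariant acceleration, so
   (k^L)^2 is an explicit rational function of L. After the substitution u = 1/L it extends
   continuously to u = 0 if a_3 = omega(velocity) is nonzero; if a_3 = 0, the same holds for
   (k^L)^2 when d_3 = 0 and for (k^L)^2 / L in general. The limits are the values at u = 0. *)

definition gmat_neg :: "real \<Rightarrow> 3 \<Rightarrow> 3 \<Rightarrow> real" where
  "gmat_neg L i j = (if i = 1 \<and> j = 1 then (1 + L) / 2 else 0)"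

definition gmat_const :: "real \<Rightarrow> 3 \<Rightarrow> 3 \<Rightarrow> real" where
  "gmat_const L i j = (if (i = 1 \<and> j = 2) \<or> (i = 2 \<and> j = 1) then (L - 1) / 2
                   else if i = 3 \<and> j = 3 then 1 else 0)"

definition gmat_pos :: "real \<Rightarrow> 3 \<Rightarrow> 3 \<Rightarrow> real" where
  "gmat_pos L i j = (if i = 2 \<and> j = 2 then (1 + L) / 2 else 0)"

lemma gmat_nth:
  "gmat L x $ i $ j =
     gmat_neg L i j * exp (-2 * x$3) + gmat_const L i j + gmat_pos L i j * exp (2 * x$3)"
  using exhaust_3[of i] exhaust_3[of j]
  by (auto simp: gmat_def om1_def om2_def omw_def gmat_neg_def gmat_const_def gmat_pos_def
                 algebra_simps power2_eq_square simp flip: exp_add)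

lemma dg_eq:
  "dg L x l i j =
     axis l 1 $ 3 * (2 * gmat_pos L i j * exp (2 * x$3) - 2 * gmat_neg L i j * exp (-2 * x$3))"
proof -
  let ?c = "axis l (1::real) $ 3"
  have "((\<lambda>s. gmat_neg L i j * exp (-2 * (x$3 + s * ?c)) + gmat_const L i j
                + gmat_pos L i j * exp (2 * (x$3 + s * ?c)))
          has_real_derivative
            ?c * (2 * gmat_pos L i j * exp (2 * x$3) - 2 * gmat_neg L i j * exp (-2 * x$3))) (at 0)"
    by (rule derivative_eq_intros refl | simp)+ (simp add: algebra_simps)
  then show ?thesis
    unfolding dg_def gmat_nth by (simp add: DERIV_imp_deriv)
qed

definition ginv_neg :: "real \<Rightarrow> 3 \<Rightarrow> 3 \<Rightarrow> real" where
  "ginv_neg L i j = (if i = 2 \<and> j = 2 then (1 + L) / (2 * L) else 0)"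

definition ginv_const :: "real \<Rightarrow> 3 \<Rightarrow> 3 \<Rightarrow> real" where
  "ginv_const L i j = (if (i = 1 \<and> j = 2) \<or> (i = 2 \<and> j = 1) then - (L - 1) / (2 * L)
                       else if i = 3 \<and> j = 3 then 1 else 0)"

definition ginv_pos :: "real \<Rightarrow> 3 \<Rightarrow> 3 \<Rightarrow> real" where
  "ginv_pos L i j = (if i = 1 \<and> j = 1 then (1 + L) / (2 * L) else 0)"

definition gmat_inv :: "real \<Rightarrow> real^3 \<Rightarrow> real^3^3" where
  "gmat_inv L x =
     (\<chi> i j. ginv_neg L i j * exp (-2 * x$3) + ginv_const L i j + ginv_pos L i j * exp (2 * x$3))"

lemma matrix_inv_unique:
  fixes A B :: "'a::comm_semiring_1^'n^'n"
  assumes "A ** B = mat 1" and "B ** A = mat 1"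
  shows "matrix_inv A = B"
proof -
  have inv: "A ** matrix_inv A = mat 1 \<and> matrix_inv A ** A = mat 1"
    unfolding matrix_inv_def by (rule someI[of _ B]) (simp add: assms)
  have "matrix_inv A = (B ** A) ** matrix_inv A"
    using assms by (simp add: matrix_mul_lid)
  also have "\<dots> = B ** (A ** matrix_inv A)"
    by (simp add: matrix_mul_assoc)
  also have "\<dots> = B"
    using inv by (simp add: matrix_mul_rid)
  finally show ?thesis .
qed

lemma matrix_inv_gmat:
  assumes "L > 0"
  shows "matrix_inv (gmat L x) = gmat_inv L x"
proof (rule matrix_inv_unique)
  show "gmat L x ** gmat_inv L x = mat 1" "gmat_inv L x ** gmat L x = mat 1"
    unfolding matrix_matrix_mult_def vec_eq_iff mat_def
    using exhaust_3 assms
    by (auto simp: sum_3 gmat_nth gmat_inv_def gmat_neg_def gmat_const_def gmat_pos_def ginv_neg_def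
                   ginv_const_def ginv_pos_def exp_minus field_simps)
qed

lemma exp_powers:
  "exp (2 * z) = exp z ^ 2" "exp (-2 * z) = inverse (exp z ^ 2)" "exp (- z) = inverse (exp z)"
  for z :: real
  by (simp_all add: exp_minus flip: exp_of_nat_mult)

lemma covacc_nth:
  assumes L: "L > 0"
  shows "covacc L p v w $ 1 = w$1 - (1 + L)^2 / (2 * L) * v$1 * v$3
                              - (L^2 - 1) * exp (p$3)^2 / (2 * L) * v$2 * v$3"
    and "covacc L p v w $ 2 = w$2 + (L^2 - 1) * exp (- p$3)^2 / (2 * L) * v$1 * v$3
                              + (1 + L)^2 / (2 * L) * v$2 * v$3"
    and "covacc L p v w $ 3 = w$3 + (1 + L) * exp (- p$3)^2 / 2 * (v$1)^2
                              - (1 + L) * exp (p$3)^2 / 2 * (v$2)^2"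
  using L
  by (simp_all add: covacc_def christoffel_def matrix_inv_gmat sum_3 dg_eq gmat_inv_def
                    gmat_neg_def gmat_pos_def ginv_neg_def ginv_const_def ginv_pos_def axis_def
                    exp_powers field_simps power2_eq_square)

definition omega2_val :: "real^3 \<Rightarrow> real^3 \<Rightarrow> real" where
  "omega2_val p v = om2 p \<bullet> v"

lemma omega_val_eq: "omega_val p v = - (exp (- p$3) * v$1 + exp (p$3) * v$2) / sqrt 2"
  by (simp add: omega_val_def omw_def inner_vec_def sum_3 field_simps)

lemma omega2_val_eq: "omega2_val p v = (- exp (- p$3) * v$1 + exp (p$3) * v$2) / sqrt 2"
  by (simp add: omega2_val_def om2_def inner_vec_def sum_3 field_simps)

lemma ginner_coframe:
  "ginner L p u v =
     u$3 * v$3 + omega2_val p u * omega2_val p v + L * (omega_val p u * omega_val p v)"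
  by (simp add: ginner_def gmat_def omega_val_def omega2_val_def om1_def inner_vec_def
                matrix_vector_mult_def sum_3 field_simps)

lemma coframe_eq_0_iff: "v = 0 \<longleftrightarrow> v$3 = 0 \<and> omega2_val p v = 0 \<and> omega_val p v = 0"
proof
  assume "v$3 = 0 \<and> omega2_val p v = 0 \<and> omega_val p v = 0"
  then have "v$1 = 0" "v$2 = 0" "v$3 = 0"
    by (auto simp: omega_val_eq omega2_val_eq)
  then show "v = 0"
    by (metis exhaust_3 vec_eq_iff zero_index)
qed (simp add: omega_val_eq omega2_val_eq)

lemma covacc_coframe:
  assumes L: "L > 0"
  shows "covacc L p v w $ 3 = w$3 + (1 + L) * omega2_val p v * omega_val p v"
    and "omega2_val p (covacc L p v w) =
           (omega2_val p w - v$3 * omega_val p v) - L * v$3 * omega_val p v"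
    and "omega_val p (covacc L p v w) =
           (omega_val p w - v$3 * omega2_val p v) - v$3 * omega2_val p v / L"
proof -
  have prod:
    "omega2_val p v * omega_val p v = (exp (- p$3)^2 * (v$1)^2 - exp (p$3)^2 * (v$2)^2) / 2"
    by (simp add: omega_val_eq omega2_val_eq power2_eq_square algebra_simps)
  show "covacc L p v w $ 3 = w$3 + (1 + L) * omega2_val p v * omega_val p v"
    unfolding mult.assoc[of "1 + L"] prod by (simp add: covacc_nth[OF L] field_simps)
  show "omega2_val p (covacc L p v w) =
          (omega2_val p w - v$3 * omega_val p v) - L * v$3 * omega_val p v"
       "omega_val p (covacc L p v w) =
          (omega_val p w - v$3 * omega2_val p v) - v$3 * omega2_val p v / L"
    using L
    by (simp_all add: covacc_nth omega_val_eq omega2_val_eq exp_powers field_simps power2_eq_square)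
qed

lemma omega_val_along_has_real_derivative:
  fixes x u :: "real \<Rightarrow> real^3"
  assumes x: "(x has_vector_derivative x') (at t within S)"
    and u: "(u has_vector_derivative u') (at t within S)"
  shows "((\<lambda>s. omega_val (x s) (u s)) has_real_derivative
            omega_val (x t) u' - x'$3 * omega2_val (x t) (u t)) (at t within S)"
proof -
  have nth: "((\<lambda>s. x s $ i) has_real_derivative x' $ i) (at t within S)"
    "((\<lambda>s. u s $ i) has_real_derivative u' $ i) (at t within S)" for i
    using bounded_linear.has_vector_derivative[OF bounded_linear_vec_nth x, of i]
      bounded_linear.has_vector_derivative[OF bounded_linear_vec_nth u, of i]
    by (simp_all add: has_real_derivative_iff_has_vector_derivative)
  show ?thesis
    unfolding omega_val_eq omega2_val_eq
    by (rule derivative_eq_intros nth refl | simp)+ (simp add: field_simps)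
qed

definition curv_sq_coframe :: "real \<Rightarrow> real \<Rightarrow> real \<Rightarrow> real \<Rightarrow> real \<Rightarrow> real \<Rightarrow> real \<Rightarrow> real" where
  "curv_sq_coframe L a1 a2 a3 n1 n2 n3 =
     (n1^2 + n2^2 + L * n3^2) / (a1^2 + a2^2 + L * a3^2)^2
     - (a1 * n1 + a2 * n2 + L * (a3 * n3))^2 / (a1^2 + a2^2 + L * a3^2)^3"

lemma curvL_coframe:
  "curvL L p v w = (let N = covacc L p v w in
     sqrt (curv_sq_coframe L (v$3) (omega2_val p v) (omega_val p v)
                             (N$3) (omega2_val p N) (omega_val p N)))"
  by (simp add: curvL_def curv_sq_coframe_def ginner_coframe Let_def power2_eq_square algebra_simps)

definition curv_coframe :: "real \<Rightarrow> real \<Rightarrow> real \<Rightarrow> real \<Rightarrow> real \<Rightarrow> real \<Rightarrow> real \<Rightarrow> real" where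
  "curv_coframe L a1 a2 a3 d1 d2 d3 =
     sqrt (curv_sq_coframe L a1 a2 a3
             (d1 + (1 + L) * a2 * a3) (d2 - L * a1 * a3) (d3 - a1 * a2 / L))"

(* The last three arguments are the derivatives along the curve of the first three
   (omega_val_along_has_real_derivative), since d omega_2 / dx_3 = - omega and
   d omega / dx_3 = - omega_2. *)
lemma curvL_eq_curv_coframe:
  assumes "L > 0"
  shows "curvL L p v w = curv_coframe L (v$3) (omega2_val p v) (omega_val p v)
           (w$3) (omega2_val p w - v$3 * omega_val p v) (omega_val p w - v$3 * omega2_val p v)"
  using assms by (simp add: curvL_coframe covacc_coframe curv_coframe_def algebra_simps)

lemma curv_sq_coframe_rescale:
  assumes "L > 0"
  shows "curv_sq_coframe L a1 a2 a3 (L * m1) (L * m2) n3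
           = (m1^2 + m2^2 + n3^2 / L) / ((a1^2 + a2^2) / L + a3^2)^2
             - (a1 * m1 + a2 * m2 + a3 * n3)^2 / (L * ((a1^2 + a2^2) / L + a3^2)^3)"
proof -
  have "a1^2 + a2^2 + L * a3^2 = L * ((a1^2 + a2^2) / L + a3^2)"
    and "(L * m1)^2 + (L * m2)^2 + L * n3^2 = L^2 * (m1^2 + m2^2 + n3^2 / L)"
    and "a1 * (L * m1) + a2 * (L * m2) + L * (a3 * n3) = L * (a1 * m1 + a2 * m2 + a3 * n3)"
    using assms by (simp_all add: field_simps power2_eq_square)
  then show ?thesis
    using assms
    by (simp add: curv_sq_coframe_def power_mult_distrib power2_eq_square power3_eq_cube)
qed

lemma tendsto_at_top_inverse:
  fixes f g :: "real \<Rightarrow> real"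
  assumes "isCont f 0" and "\<forall>\<^sub>F L in at_top. g L = f (inverse L)"
  shows "(g \<longlongrightarrow> f 0) at_top"
proof -
  have "(f \<longlongrightarrow> f 0) (at_right 0)"
    using assms(1) unfolding isCont_def filterlim_at_split by simp
  moreover have "\<forall>\<^sub>F u in at_right 0. f u = g (inverse u)"
    using assms(2) unfolding eventually_at_top_to_right by (simp add: eq_commute)
  ultimately show ?thesis
    unfolding filterlim_at_top_to_right by (rule Lim_transform_eventually)
qed

lemma curv_coframe_tendsto_nonhorizontal:
  assumes "a3 \<noteq> 0"
  shows "((\<lambda>L. curv_coframe L a1 a2 a3 d1 d2 d3) \<longlongrightarrow> sqrt (a1^2 + a2^2) / \<bar>a3\<bar>) at_top"
proof -
  define m1 m2 n3 A
    where "m1 u = d1 * u + (u + 1) * a2 * a3" and "m2 u = d2 * u - a1 * a3"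
      and "n3 u = d3 - a1 * a2 * u" and "A u = (a1^2 + a2^2) * u + a3^2" for u
  define f where "f u = sqrt ((m1 u ^ 2 + m2 u ^ 2 + n3 u ^ 2 * u) / A u ^ 2
                             - u * (a1 * m1 u + a2 * m2 u + a3 * n3 u)^2 / A u ^ 3)" for u
  have eq: "curv_coframe L a1 a2 a3 d1 d2 d3 = f (inverse L)" if "L > 0" for L
  proof -
    have "d1 + (1 + L) * a2 * a3 = L * (d1 * inverse L + (inverse L + 1) * a2 * a3)"
      and "d2 - L * a1 * a3 = L * (d2 * inverse L - a1 * a3)"
      using that by (simp_all add: field_simps)
    then show ?thesis
      using that
      by (simp add: curv_coframe_def curv_sq_coframe_rescale f_def m1_def m2_def n3_def A_def
                    divide_inverse mult.commute)
  qed
  have "\<forall>\<^sub>F L in at_top. curv_coframe L a1 a2 a3 d1 d2 d3 = f (inverse L)"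
    using eventually_gt_at_top[of 0] by (rule eventually_mono) (rule eq)
  moreover have "isCont f 0"
    unfolding f_def m1_def m2_def n3_def A_def using assms by (intro continuous_intros) auto
  moreover have "f 0 = sqrt (a1^2 + a2^2) / \<bar>a3\<bar>"
  proof -
    have "f 0 = sqrt ((a1^2 + a2^2) / a3^2)"
      using assms by (simp add: f_def m1_def m2_def n3_def A_def power_mult_distrib field_simps)
    then show ?thesis
      by (simp add: real_sqrt_divide)
  qed
  ultimately show ?thesis
    using tendsto_at_top_inverse by metis
qed

lemma curv_coframe_tendsto_horizontal:
  assumes "a1^2 + a2^2 > 0" and "a3 = 0" and "d3 = 0"
  shows "((\<lambda>L. curv_coframe L a1 a2 a3 d1 d2 d3) \<longlongrightarrow>
           sqrt ((d1^2 + d2^2) / (a1^2 + a2^2)^2 - (a1 * d1 + a2 * d2)^2 / (a1^2 + a2^2)^3)) at_top"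
proof -
  define f where "f u = sqrt ((d1^2 + d2^2 + (a1 * a2)^2 * u) / (a1^2 + a2^2)^2
                             - (a1 * d1 + a2 * d2)^2 / (a1^2 + a2^2)^3)" for u
  have "\<forall>\<^sub>F L in at_top. curv_coframe L a1 a2 a3 d1 d2 d3 = f (inverse L)"
    using eventually_gt_at_top[of 0]
    by eventually_elim
       (simp add: assms(2,3) curv_coframe_def curv_sq_coframe_def f_def
                  field_simps power2_eq_square)
  moreover have "isCont f 0"
    unfolding f_def using assms(1) by (intro continuous_intros) auto
  ultimately show ?thesis
    using tendsto_at_top_inverse by (fastforce simp: f_def)
qed

lemma curv_coframe_over_sqrt_tendsto_horizontal:
  assumes "a1^2 + a2^2 > 0" and "a3 = 0"
  shows "((\<lambda>L. curv_coframe L a1 a2 a3 d1 d2 d3 / sqrt L) \<longlongrightarrow> \<bar>d3\<bar> / (a1^2 + a2^2)) at_top"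
proof -
  define f where "f u = sqrt (((d1^2 + d2^2) * u + (d3 - a1 * a2 * u)^2) / (a1^2 + a2^2)^2
                             - u * (a1 * d1 + a2 * d2)^2 / (a1^2 + a2^2)^3)" for u
  have eq: "curv_coframe L a1 a2 a3 d1 d2 d3 / sqrt L = f (inverse L)" if "L > 0" for L
  proof -
    have "curv_sq_coframe L a1 a2 0 d1 d2 (d3 - a1 * a2 / L) / L
            = ((d1^2 + d2^2) * inverse L + (d3 - a1 * a2 * inverse L)^2) / (a1^2 + a2^2)^2
              - inverse L * (a1 * d1 + a2 * d2)^2 / (a1^2 + a2^2)^3"
      using that by (simp add: curv_sq_coframe_def field_simps)
    then show ?thesis
      using that by (simp add: assms(2) curv_coframe_def f_def real_sqrt_divide[symmetric])
  qed
  have "\<forall>\<^sub>F L in at_top. curv_coframe L a1 a2 a3 d1 d2 d3 / sqrt L = f (inverse L)"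
    using eventually_gt_at_top[of 0] by (rule eventually_mono) (rule eq)
  moreover have "isCont f 0"
    unfolding f_def using assms(1) by (intro continuous_intros) auto
  moreover have "f 0 = \<bar>d3\<bar> / (a1^2 + a2^2)"
    using assms(1) by (simp add: f_def power_divide[symmetric])
  ultimately show ?thesis
    using tendsto_at_top_inverse by metis
qed

theorem lemma5p3:
  fixes \<gamma> \<gamma>' \<gamma>'' :: "real \<Rightarrow> real^3" and a b t :: real
  assumes ab: "a < b"
    and d1: "\<And>s. s \<in> {a..b} \<Longrightarrow> (\<gamma> has_vector_derivative \<gamma>' s) (at s within {a..b})"
    and d2: "\<And>s. s \<in> {a..b} \<Longrightarrow> (\<gamma>' has_vector_derivative \<gamma>'' s) (at s within {a..b})"
    and c2: "continuous_on {a..b} \<gamma>''"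
    and reg: "\<And>s. s \<in> {a..b} \<Longrightarrow> \<gamma>' s \<noteq> 0"
    and t: "t \<in> {a..b}"
  defines "k \<equiv> (\<lambda>L. curvL L (\<gamma> t) (\<gamma>' t) (\<gamma>'' t))"
    and "B \<equiv> - exp (- (\<gamma> t $ 3)) * (\<gamma>' t $ 1) + exp (\<gamma> t $ 3) * (\<gamma>' t $ 2)"
    and "B' \<equiv> \<gamma>'' t $ 2 * exp (\<gamma> t $ 3) + \<gamma>' t $ 2 * \<gamma>' t $ 3 * exp (\<gamma> t $ 3)
              - \<gamma>'' t $ 1 * exp (- (\<gamma> t $ 3)) + \<gamma>' t $ 1 * \<gamma>' t $ 3 * exp (- (\<gamma> t $ 3))"
    and "w \<equiv> omega_val (\<gamma> t) (\<gamma>' t)"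
    and "dw \<equiv> vector_derivative (\<lambda>s. omega_val (\<gamma> s) (\<gamma>' s)) (at t within {a..b})"
  shows "(w \<noteq> 0 \<longrightarrow> (k \<longlongrightarrow> sqrt (B^2 / 2 + (\<gamma>' t $ 3)^2) / \<bar>w\<bar>) at_top)
       \<and> (w = 0 \<and> dw = 0 \<longrightarrow>
           (k \<longlongrightarrow> sqrt (((\<gamma>'' t $ 3)^2 + B'^2 / 2) / (B^2 / 2 + (\<gamma>' t $ 3)^2)^2
                   - (\<gamma>' t $ 3 * \<gamma>'' t $ 3 + B * B' / 2)^2 / (B^2 / 2 + (\<gamma>' t $ 3)^2)^3)) at_top)
       \<and> (w = 0 \<and> dw \<noteq> 0 \<longrightarrow>
           ((\<lambda>L. k L / sqrt L) \<longlongrightarrow> \<bar>dw\<bar> / (B^2 / 2 + (\<gamma>' t $ 3)^2)) at_top)"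
proof -
  define p v acc where "p = \<gamma> t" and "v = \<gamma>' t" and "acc = \<gamma>'' t"
  define \<beta> \<beta>' where "\<beta> = omega2_val p v" and "\<beta>' = omega2_val p acc - v$3 * w"
  have sqrt2: "sqrt 2 * (sqrt 2 * x) = 2 * x" for x :: real
    by (simp flip: mult.assoc)
  have B: "B = sqrt 2 * \<beta>" and B': "B' = sqrt 2 * \<beta>'"
    by (simp_all add: B_def B'_def \<beta>_def \<beta>'_def w_def p_def v_def acc_def omega_val_eq omega2_val_eq
                      field_simps sqrt2)
  have dw: "dw = omega_val p acc - v$3 * \<beta>"
    unfolding dw_def \<beta>_def p_def v_def acc_def
    using omega_val_along_has_real_derivative[OF d1[OF t] d2[OF t]]
    by (simp add: vector_derivative_within_closed_interval[OF ab t]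
                  has_real_derivative_iff_has_vector_derivative)
  have k_eventually: "\<forall>\<^sub>F L in at_top. k L = curv_coframe L (v$3) \<beta> w (acc$3) \<beta>' dw"
    using eventually_gt_at_top[of 0]
    by eventually_elim
       (simp add: k_def curvL_eq_curv_coframe dw \<beta>_def \<beta>'_def w_def p_def v_def acc_def)
  have B_sq: "B^2 / 2 = \<beta>^2" and B'_sq: "B'^2 / 2 = \<beta>'^2" and BB': "B * B' / 2 = \<beta> * \<beta>'"
    by (simp_all add: B B' power_mult_distrib sqrt2 algebra_simps)
  have S: "B^2 / 2 + (\<gamma>' t $ 3)^2 = (v$3)^2 + \<beta>^2"
    by (simp add: B_sq v_def)
  have S_pos: "(v$3)^2 + \<beta>^2 > 0" if "w = 0"
    using reg[OF t] that coframe_eq_0_iff[of v p]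
    by (auto simp: \<beta>_def w_def p_def v_def add_pos_nonneg add_nonneg_pos)
  have k_rescaled:
    "\<forall>\<^sub>F L in at_top. k L / sqrt L = curv_coframe L (v$3) \<beta> w (acc$3) \<beta>' dw / sqrt L"
    using k_eventually by (rule eventually_mono) simp
  show ?thesis
    unfolding S B'_sq BB' tendsto_cong[OF k_eventually] tendsto_cong[OF k_rescaled]
    using S_pos
    by (auto simp: v_def acc_def
             intro: curv_coframe_tendsto_nonhorizontal curv_coframe_tendsto_horizontal
                    curv_coframe_over_sqrt_tendsto_horizontal)
qed

end
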